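(* The series $\Psi_0^+(x)=\tau([x])$ and $\Psi_0^-(x)=\tau(-[x])$ satisfy \[ \big(\beta D-S(R_+)\big)\Psi_0^+(x)=0,\qquad \big(\beta D+S(R_-)\big)\Psi_0^-(x)=0, \] where $S(R_\pm)=\sum_{k=1}^L ks_kR_\pm^k$.
   Context: Let $G(z)=1+\sum_{k=1}^Mg_kz^k$ be a polynomial, $\beta,\gamma$ formal parameters, ${\bf s}=(s_1,s_2,\dots)$ with only $s_1,\dots,s_L$ nonzero and $S(z)=\sum_{k=1}^Lks_kz^k$. For a partition $\lambda$ let $r_\lambda=\prod_{(i,j)\in\lambda}G((j-i)\beta)$ (boxes $(i,j)$, $i$ = row, $j$ = column), and $\tau({\bf t})=\sum_\lambda\gamma^{|\lambda|}r_\lambda s_\lambda({\bf t})s_\lambda(\beta^{-1}{\bf s})$, Schur functions being written in ${\bf t}=(t_1,t_2,\dots)$ with $p_i=it_i$, and $\beta^{-1}{\bf s}=(\beta^{-1}s_1,\dots)$. Here $[x]=(x,x^2/2,x^3/3,\dots)$. $D=x\,d/dx$, and $R_\pm=\gamma xG(\pm\beta D)$ acts on formal series in $x$ by $R_\pm(x^j)=\gamma G(\pm\beta j)x^{j+1}$. *)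

theory Defs
  imports "HOL-Computational_Algebra.Computational_Algebra" "HOL-Combinatorics.Permutations"
begin

definition partitions_of :: "nat \<Rightarrow> nat list set" where
  "partitions_of n = {lam. sorted_wrt (\<ge>) lam \<and> 0 \<notin> set lam \<and> sum_list lam = n}"

text \<open>Complete homogeneous functions h_n(t), defined by
  exp(sum_k t_k z^k) = sum_n h_n(t) z^n, i.e. h_n is the coefficient of z^n of
  prod_k exp(t_k z^k): the sum over multiplicity vectors m with sum_k k m_k = n of
  prod_k t_k^(m_k)/m_k!.\<close>
definition hcomp :: "(nat \<Rightarrow> 'r::{comm_ring_1,inverse}) \<Rightarrow> nat \<Rightarrow> 'r" where
  "hcomp t n =
     (\<Sum>m\<in>{m::nat\<Rightarrow>nat. (\<forall>k. (k = 0 \<or> k > n) \<longrightarrow> m k = 0) \<and> (\<Sum>k=1..n. k * m k) = n}.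
        \<Prod>k=1..n. t k ^ m k * inverse (of_nat (fact (m k))))"

definition hcomp_int :: "(nat \<Rightarrow> 'r::{comm_ring_1,inverse}) \<Rightarrow> int \<Rightarrow> 'r" where
  "hcomp_int t k = (if k < 0 then 0 else hcomp t (nat k))"

text \<open>Jacobi--Trudi: s_lambda(t) = det (h_{lambda_i - i + j}(t))_{i,j}, written via
  the Leibniz expansion (indices shifted to start at 0).\<close>
definition schur :: "(nat \<Rightarrow> 'r::{comm_ring_1,inverse}) \<Rightarrow> nat list \<Rightarrow> 'r" where
  "schur t lam =
     (\<Sum>p\<in>{p. p permutes {0..<length lam}}.
        of_int (sign p) *
        (\<Prod>i<length lam. hcomp_int t (int (lam ! i) - int i + int (p i))))"

definition r_lambda :: "'a::field poly \<Rightarrow> 'a \<Rightarrow> nat list \<Rightarrow> 'a" where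
  "r_lambda G \<beta> lam =
     (\<Prod>i\<in>{1..length lam}. \<Prod>j\<in>{1..lam ! (i - 1)}.
        poly G ((of_int (int j - int i)) * \<beta>))"

text \<open>tau(t) = sum_lambda gamma^|lambda| r_lambda s_lambda(t) s_lambda(beta^{-1} s),
  evaluated at a sequence t of formal power series in x, the sum being taken
  (as a limit in the x-adic topology of formal power series) degree by degree
  in |lambda|.\<close>
definition tau ::
  "'a::field poly \<Rightarrow> 'a \<Rightarrow> 'a \<Rightarrow> (nat \<Rightarrow> 'a) \<Rightarrow> (nat \<Rightarrow> 'a fps) \<Rightarrow> 'a fps" where
  "tau G \<beta> \<gamma> s t =
     (\<Sum>n. \<Sum>lam\<in>partitions_of n.
        fps_const (\<gamma> ^ n * r_lambda G \<beta> lam * schur (\<lambda>k. s k / \<beta>) lam) * schur t lam)"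

text \<open>The Miwa shift [x] = (x, x^2/2, x^3/3, ...), as a sequence indexed from 1.\<close>
definition miwa :: "nat \<Rightarrow> 'a::field fps" where
  "miwa k = fps_const (inverse (of_nat k)) * fps_X ^ k"

definition Dop :: "'a::field fps \<Rightarrow> 'a fps" where
  "Dop f = fps_X * fps_deriv f"

text \<open>R = gamma x G(sigma beta D) with sigma = +1 or -1, i.e. R(x^j) = gamma G(sigma beta j) x^(j+1).\<close>
definition Rop :: "'a::field poly \<Rightarrow> 'a \<Rightarrow> 'a \<Rightarrow> 'a \<Rightarrow> 'a fps \<Rightarrow> 'a fps" where
  "Rop G \<beta> \<gamma> \<sigma> f =
     Abs_fps (\<lambda>n. if n = 0 then 0 else \<gamma> * poly G (\<sigma> * \<beta> * of_nat (n - 1)) * fps_nth f (n - 1))"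

definition S_op :: "nat \<Rightarrow> (nat \<Rightarrow> 'a::field) \<Rightarrow> ('a fps \<Rightarrow> 'a fps) \<Rightarrow> 'a fps \<Rightarrow> 'a fps" where
  "S_op L s R f = (\<Sum>k=1..L. fps_const (of_nat k * s k) * (R ^^ k) f)"

end

theory Submission
  imports Defs "Jordan_Normal_Form.Determinant"
begin

text \<open>At t = [x] only the one-row Schur functions survive, s_(n)([x]) = h_n([x]) = x^n, and at
  t = -[x] only the one-column ones, s_(1^n)(-[x]) = (-x)^n. Hence Psi_0^+ and Psi_0^- are the
  series sum_n gamma^n r_n c_n x^n with r_n = prod_(m<n) G(+-m beta) and c_n = h_n(u), resp.
  (-1)^n e_n(u), where u = beta^-1 s. Since R_+- maps x^j to gamma G(+-beta j) x^(j+1), the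
  coefficient of x^n in S(R_+-) Psi_0^+- is gamma^n r_n sum_k k s_k c_(n-k), so both equations
  reduce to the Newton identities n h_n = sum_k k u_k h_(n-k) and
  n (-1)^n e_n = - sum_k k u_k (-1)^(n-k) e_(n-k). The first follows by counting the parts of a
  partition, the second from H(z) E(-z) = 1 and H' = T' H, where H, E, T are the generating
  series of h, e and u.\<close>

definition multiplicity_vectors :: "nat \<Rightarrow> (nat \<Rightarrow> nat) set" where
  "multiplicity_vectors n =
     {m. (\<forall>k. (k = 0 \<or> k > n) \<longrightarrow> m k = 0) \<and> (\<Sum>k=1..n. k * m k) = n}"

definition hcomp_term :: "(nat \<Rightarrow> 'r::{comm_ring_1,inverse}) \<Rightarrow> nat \<Rightarrow> (nat \<Rightarrow> nat) \<Rightarrow> 'r" where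
  "hcomp_term t N m = (\<Prod>k=1..N. t k ^ m k * inverse (of_nat (fact (m k))))"

lemma hcomp_eq_sum_hcomp_term: "hcomp t n = (\<Sum>m\<in>multiplicity_vectors n. hcomp_term t n m)"
  unfolding hcomp_def hcomp_term_def multiplicity_vectors_def by simp

lemma multiplicity_vectors_weight_le:
  assumes "m \<in> multiplicity_vectors n" "j \<in> {1..n}"
  shows "j * m j \<le> n"
proof -
  have "j * m j \<le> (\<Sum>k=1..n. k * m k)"
    by (rule member_le_sum[where f="\<lambda>k. k * m k"]) (use assms in auto)
  thus ?thesis using assms unfolding multiplicity_vectors_def by simp
qed

lemma finite_multiplicity_vectors: "finite (multiplicity_vectors n)"
proof (rule finite_subset)
  show "multiplicity_vectors n \<subseteq> {f. \<forall>x. (x \<in> {1..n} \<longrightarrow> f x \<in> {0..n}) \<and> (x \<notin> {1..n} \<longrightarrow> f x = 0)}"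
  proof safe
    fix m x assume m: "m \<in> multiplicity_vectors n"
    show "m x \<in> {0..n}" if "x \<in> {1..n}"
    proof -
      have "m x \<le> x * m x" using that by simp
      moreover have "x * m x \<le> n" by (rule multiplicity_vectors_weight_le[OF m that])
      ultimately show ?thesis by (simp only: atLeastAtMost_iff) linarith
    qed
    show "m x = 0" if "x \<notin> {1..n}"
      using m that unfolding multiplicity_vectors_def by (auto simp: not_le)
  qed
qed (rule finite_set_of_finite_funs; simp)

lemma multiplicity_vectors_0: "multiplicity_vectors 0 = {\<lambda>_. 0}"
  unfolding multiplicity_vectors_def by (auto simp: fun_eq_iff)

lemma hcomp_0 [simp]: "hcomp t 0 = 1"
  unfolding hcomp_eq_sum_hcomp_term multiplicity_vectors_0 hcomp_term_def by simp

lemma sum_weights_fun_upd: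
  assumes "finite A" "k \<in> A"
  shows "(\<Sum>j\<in>A. j * (m(k:=v)) j) + k * m k = (\<Sum>j\<in>A. j * m j) + k * (v::nat)"
proof -
  have "(\<Sum>j\<in>A - {k}. j * (m(k:=v)) j) = (\<Sum>j\<in>A - {k}. j * m j)"
    by (rule sum.cong) auto
  thus ?thesis by (simp add: sum.remove[OF assms])
qed

lemma multiplicity_vectors_add_part:
  assumes m: "m \<in> multiplicity_vectors (n - k)" and k: "k \<in> {1..n}"
  shows "m(k := Suc (m k)) \<in> multiplicity_vectors n"
proof -
  have zero: "\<forall>j. (j = 0 \<or> j > n - k) \<longrightarrow> m j = 0"
    and weight: "(\<Sum>j=1..n-k. j * m j) = n - k"
    using m unfolding multiplicity_vectors_def by auto
  have "(\<Sum>j=1..n. j * m j) = (\<Sum>j=1..n-k. j * m j)"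
    by (rule sum.mono_neutral_right) (use zero in auto)
  moreover have "(\<Sum>j=1..n. j * (m(k := Suc (m k))) j) + k * m k = (\<Sum>j=1..n. j * m j) + k * Suc (m k)"
    by (rule sum_weights_fun_upd) (use k in auto)
  ultimately show ?thesis
    using zero weight k unfolding multiplicity_vectors_def by auto
qed

lemma multiplicity_vectors_remove_part:
  assumes m: "m \<in> multiplicity_vectors n" and mk: "m k \<noteq> 0" and k: "k \<in> {1..n}"
  shows "m(k := m k - 1) \<in> multiplicity_vectors (n - k)"
proof -
  define m' where "m' = m(k := m k - 1)"
  have zero: "\<forall>j. (j = 0 \<or> j > n) \<longrightarrow> m j = 0" and weight: "(\<Sum>j=1..n. j * m j) = n"
    using m unfolding multiplicity_vectors_def by auto
  have "(\<Sum>j=1..n. j * m' j) + k * m k = n + k * (m k - 1)"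
    unfolding m'_def using sum_weights_fun_upd[of "{1..n}" k m "m k - 1"] k weight by simp
  hence weight': "(\<Sum>j=1..n. j * m' j) = n - k"
    using mk multiplicity_vectors_weight_le[OF m k] by (cases "m k") (auto simp: algebra_simps)
  have zero': "m' j = 0" if "j = 0 \<or> j > n - k" for j
  proof (cases "j \<in> {1..n}")
    case True
    have "j * m' j \<le> n - k"
      unfolding weight'[symmetric] by (rule member_le_sum[where f="\<lambda>j. j * m' j"]) (use True in auto)
    thus ?thesis using that True by (cases "m' j") auto
  next
    case False
    thus ?thesis using that zero k by (auto simp: m'_def)
  qed
  have "(\<Sum>j=1..n. j * m' j) = (\<Sum>j=1..n-k. j * m' j)"
    by (rule sum.mono_neutral_right) (auto simp: zero')
  hence "(\<Sum>j=1..n-k. j * m' j) = n - k" using weight' by simp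
  thus ?thesis
    using zero' unfolding m'_def[symmetric] multiplicity_vectors_def mem_Collect_eq by blast
qed

lemma bij_betw_add_part:
  assumes "k \<in> {1..n}"
  shows "bij_betw (\<lambda>m. m(k := Suc (m k))) (multiplicity_vectors (n - k))
           {m \<in> multiplicity_vectors n. m k \<noteq> 0}"
proof (rule bij_betw_byWitness[where f'="\<lambda>m. m(k := m k - 1)"])
  show "(\<lambda>m. m(k := Suc (m k))) ` multiplicity_vectors (n - k) \<subseteq> {m \<in> multiplicity_vectors n. m k \<noteq> 0}"
    using multiplicity_vectors_add_part[OF _ assms] by auto
  show "(\<lambda>m. m(k := m k - 1)) ` {m \<in> multiplicity_vectors n. m k \<noteq> 0} \<subseteq> multiplicity_vectors (n - k)"
    using multiplicity_vectors_remove_part[OF _ _ assms] by auto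
qed auto

lemma hcomp_term_extend:
  assumes "\<forall>k>n. m k = 0" "n \<le> N" "inverse (1::'r::{comm_ring_1,inverse}) = 1"
  shows "hcomp_term (t :: nat \<Rightarrow> 'r) N m = hcomp_term t n m"
  unfolding hcomp_term_def by (rule prod.mono_neutral_right) (use assms in auto)

lemma hcomp_term_add_part:
  fixes t :: "nat \<Rightarrow> 'r::{comm_ring_1,inverse}"
  assumes inv: "\<And>m. of_nat (fact m) * inverse (of_nat (fact m) :: 'r) = 1"
    and m: "m \<in> multiplicity_vectors (n - k)" and k: "k \<in> {1..n}"
  shows "of_nat (Suc (m k)) * hcomp_term t n (m(k := Suc (m k))) = t k * hcomp_term t (n - k) m"
proof -
  let ?F = "\<lambda>j a. t j ^ a * inverse (of_nat (fact a) :: 'r)"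
  let ?rest = "\<Prod>j\<in>{1..n}-{k}. ?F j (m j)"
  have bumped: "hcomp_term t n (m(k := Suc (m k))) = ?F k (Suc (m k)) * ?rest"
    unfolding hcomp_term_def by (subst prod.remove[OF _ k]) (auto intro: prod.cong)
  have fact_step: "of_nat (Suc a) * inverse (of_nat (fact (Suc a)) :: 'r) = inverse (of_nat (fact a))"
    for a
  proof -
    have "of_nat (Suc a) * inverse (of_nat (fact (Suc a)) :: 'r)
        = of_nat (Suc a) * inverse (of_nat (fact (Suc a))) * (of_nat (fact a) * inverse (of_nat (fact a)))"
      using inv by simp
    also have "\<dots> = (of_nat (fact (Suc a)) * inverse (of_nat (fact (Suc a)))) * inverse (of_nat (fact a))"
      by (simp add: fact_Suc algebra_simps)
    finally show ?thesis by (simp only: inv mult_1_left)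
  qed
  have "of_nat (Suc (m k)) * ?F k (Suc (m k))
      = t k * t k ^ m k * (of_nat (Suc (m k)) * inverse (of_nat (fact (Suc (m k)))))"
    by (simp only: power_Suc mult_ac)
  also have "\<dots> = t k * ?F k (m k)"
    by (simp only: fact_step mult_ac)
  finally have "of_nat (Suc (m k)) * ?F k (Suc (m k)) = t k * ?F k (m k)" .
  moreover have "hcomp_term t n m = ?F k (m k) * ?rest"
    unfolding hcomp_term_def by (subst prod.remove[OF _ k]) auto
  moreover have "hcomp_term t n m = hcomp_term t (n - k) m"
    using m inv[of 0] by (intro hcomp_term_extend) (auto simp: multiplicity_vectors_def)
  ultimately show ?thesis
    unfolding bumped by (simp add: mult.assoc[symmetric])
qed

text \<open>Weighting each multiplicity vector by n = sum_k k m_k and removing one part k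
  (a bijection onto the vectors for n - k) yields the Newton identity.\<close>

lemma hcomp_newton:
  fixes t :: "nat \<Rightarrow> 'r::{comm_ring_1,inverse}"
  assumes inv: "\<And>m. of_nat (fact m) * inverse (of_nat (fact m) :: 'r) = 1"
  shows "of_nat n * hcomp t n = (\<Sum>k=1..n. of_nat k * t k * hcomp t (n - k))"
proof -
  have "of_nat n * hcomp t n
      = (\<Sum>m\<in>multiplicity_vectors n. \<Sum>k=1..n. of_nat (k * m k) * hcomp_term t n m)"
    unfolding hcomp_eq_sum_hcomp_term sum_distrib_left
  proof (rule sum.cong[OF refl])
    fix m assume "m \<in> multiplicity_vectors n"
    hence "n = (\<Sum>k=1..n. k * m k)" unfolding multiplicity_vectors_def by simp
    hence "(of_nat n :: 'r) = (\<Sum>k=1..n. of_nat (k * m k))" by (subst of_nat_sum[symmetric]) simp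
    thus "of_nat n * hcomp_term t n m = (\<Sum>k=1..n. of_nat (k * m k) * hcomp_term t n m)"
      by (simp add: sum_distrib_right)
  qed
  also have "\<dots> = (\<Sum>k=1..n. \<Sum>m\<in>multiplicity_vectors n. of_nat (k * m k) * hcomp_term t n m)"
    by (rule sum.swap)
  also have "\<dots> = (\<Sum>k=1..n. of_nat k * t k * hcomp t (n - k))"
  proof (rule sum.cong[OF refl])
    fix k assume k: "k \<in> {1..n}"
    let ?f = "\<lambda>m. (of_nat (k * m k) :: 'r) * hcomp_term t n m"
    have "(\<Sum>m\<in>multiplicity_vectors n. ?f m) = (\<Sum>m\<in>{m \<in> multiplicity_vectors n. m k \<noteq> 0}. ?f m)"
      by (rule sum.mono_neutral_right) (auto simp: finite_multiplicity_vectors)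
    also have "\<dots> = (\<Sum>m\<in>multiplicity_vectors (n - k). ?f (m(k := Suc (m k))))"
      by (rule sum.reindex_bij_betw[OF bij_betw_add_part[OF k], symmetric])
    also have "\<dots> = (\<Sum>m\<in>multiplicity_vectors (n - k). of_nat k * t k * hcomp_term t (n - k) m)"
    proof (rule sum.cong[OF refl])
      fix m assume m: "m \<in> multiplicity_vectors (n - k)"
      have "?f (m(k := Suc (m k)))
          = of_nat k * (of_nat (Suc (m k)) * hcomp_term t n (m(k := Suc (m k))))"
        by (simp only: fun_upd_same of_nat_mult mult.assoc)
      thus "?f (m(k := Suc (m k))) = of_nat k * t k * hcomp_term t (n - k) m"
        by (simp only: hcomp_term_add_part[OF inv m k] mult.assoc)
    qed
    also have "\<dots> = of_nat k * t k * hcomp t (n - k)"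
      by (simp add: hcomp_eq_sum_hcomp_term sum_distrib_left)
    finally show "(\<Sum>m\<in>multiplicity_vectors n. ?f m) = of_nat k * t k * hcomp t (n - k)" .
  qed
  finally show ?thesis .
qed

lemma fps_of_nat_fact_mult_inverse:
  "of_nat (fact m) * inverse (of_nat (fact m) :: 'a::field_char_0 fps) = 1"
proof -
  have "inverse (of_nat (fact m) :: 'a fps) = fps_const (inverse (of_nat (fact m)))"
    by (metis fps_of_nat fps_const_inverse)
  thus ?thesis by (simp flip: fps_of_nat add: fps_const_mult[symmetric])
qed

lemma hcomp_fps_eqI:
  fixes t b :: "nat \<Rightarrow> 'a::field_char_0 fps"
  assumes "b 0 = 1"
    and "\<And>n. n > 0 \<Longrightarrow> of_nat n * b n = (\<Sum>k=1..n. of_nat k * t k * b (n - k))"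
  shows "hcomp t n = b n"
proof (induction n rule: less_induct)
  case (less n)
  show ?case
  proof (cases "n = 0")
    case False
    have "of_nat n * hcomp t n = (\<Sum>k=1..n. of_nat k * t k * hcomp t (n - k))"
      by (rule hcomp_newton[OF fps_of_nat_fact_mult_inverse])
    also have "\<dots> = (\<Sum>k=1..n. of_nat k * t k * b (n - k))"
      using less False by (intro sum.cong) auto
    also have "\<dots> = of_nat n * b n"
      using assms(2) False by simp
    finally have "fps_const (of_nat n) * hcomp t n = fps_const (of_nat n) * b n"
      by (simp only: fps_of_nat)
    thus ?thesis using False by simp
  qed (simp add: assms(1))
qed

lemma of_nat_mult_miwa: "k > 0 \<Longrightarrow> of_nat k * (miwa k :: 'a::field_char_0 fps) = fps_X ^ k"
  unfolding miwa_def
  by (simp flip: fps_of_nat add: mult.assoc[symmetric] fps_const_mult[symmetric])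

lemma hcomp_miwa: "hcomp (miwa :: nat \<Rightarrow> 'a::field_char_0 fps) n = fps_X ^ n"
proof (rule hcomp_fps_eqI)
  fix n :: nat
  have "(\<Sum>k=1..n. of_nat k * miwa k * fps_X ^ (n - k)) = (\<Sum>k=1..n. fps_X ^ n :: 'a fps)"
    by (rule sum.cong) (auto simp: of_nat_mult_miwa simp flip: power_add)
  thus "of_nat n * fps_X ^ n = (\<Sum>k=1..n. of_nat k * miwa k * fps_X ^ (n - k) :: 'a fps)"
    by simp
qed simp

lemma hcomp_neg_miwa:
  "hcomp (\<lambda>k. - miwa k :: 'a::field_char_0 fps) n =
     (if n = 0 then 1 else if n = 1 then - fps_X else 0)"
proof (rule hcomp_fps_eqI)
  fix n :: nat assume "n > 0"
  let ?b = "\<lambda>n. if n = 0 then 1 else if n = 1 then - fps_X else 0 :: 'a fps"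
  let ?g = "\<lambda>k. of_nat k * - miwa k * ?b (n - k)"
  show "of_nat n * ?b n = (\<Sum>k=1..n. ?g k)"
  proof (cases "n = 1")
    case False
    with \<open>n > 0\<close> have n: "n \<ge> 2" by simp
    have "(\<Sum>k=1..n. ?g k) = (\<Sum>k\<in>{n - 1, n}. ?g k)"
      by (rule sum.mono_neutral_right) (use n in auto)
    also have "\<dots> = fps_X ^ (n - 1) * fps_X - fps_X ^ n"
      using n by (simp add: of_nat_mult_miwa del: of_nat_diff)
    also have "\<dots> = 0"
      using n by (simp flip: power_Suc2)
    finally show ?thesis using n by simp
  qed (simp add: miwa_def)
qed simp

definition jacobi_trudi_mat :: "(nat \<Rightarrow> 'r::{comm_ring_1,inverse}) \<Rightarrow> nat list \<Rightarrow> 'r mat" where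
  "jacobi_trudi_mat t lam =
     mat (length lam) (length lam) (\<lambda>(i, j). hcomp_int t (int (lam ! i) - int i + int j))"

lemma jacobi_trudi_mat_carrier: "jacobi_trudi_mat t lam \<in> carrier_mat (length lam) (length lam)"
  unfolding jacobi_trudi_mat_def by simp

lemma schur_eq_det: "schur t lam = det (jacobi_trudi_mat t lam)"
  unfolding det_def'[OF jacobi_trudi_mat_carrier] schur_def atLeast0LessThan
proof (rule sum.cong[OF refl])
  fix p assume "p \<in> {p. p permutes {..<length lam}}"
  hence p: "p i < length lam" if "i < length lam" for i
    using permutes_in_image that by fastforce
  have "(\<Prod>i<length lam. jacobi_trudi_mat t lam $$ (i, p i))
      = (\<Prod>i<length lam. hcomp_int t (int (lam ! i) - int i + int (p i)))"
    by (rule prod.cong[OF refl]) (simp add: jacobi_trudi_mat_def p)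
  thus "of_int (sign p) * (\<Prod>i<length lam. hcomp_int t (int (lam ! i) - int i + int (p i)))
      = signof p * (\<Prod>i<length lam. jacobi_trudi_mat t lam $$ (i, p i))"
    by simp
qed

lemma schur_singleton: "schur t [n] = hcomp t n"
  unfolding schur_eq_det jacobi_trudi_mat_def by (subst det_single) (auto simp: hcomp_int_def)

lemma schur_Nil: "schur t [] = 1"
  unfolding schur_eq_det jacobi_trudi_mat_def by simp

lemma schur_miwa_eq_0:
  assumes "length lam \<ge> 2" and "lam ! 1 \<ge> 1" and "lam ! 1 \<le> lam ! 0"
  shows "schur (miwa :: nat \<Rightarrow> 'a::field_char_0 fps) lam = 0"
proof -
  let ?n = "length lam"
  let ?A = "jacobi_trudi_mat (miwa :: nat \<Rightarrow> 'a fps) lam"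
  let ?B = "multrow 1 ((fps_X :: 'a fps) ^ (lam ! 0 + 1 - lam ! 1)) ?A"
  have A: "?A \<in> carrier_mat ?n ?n" by (rule jacobi_trudi_mat_carrier)
  have n: "0 < ?n" "1 < ?n" using assms(1) by auto
  have hcomp_int_miwa: "hcomp_int (miwa :: nat \<Rightarrow> 'a fps) k = fps_X ^ nat k" if "k \<ge> 0" for k
    using that by (simp add: hcomp_int_def hcomp_miwa)
  \<comment> \<open>After scaling by a power of x, the second row of the Jacobi--Trudi matrix at [x] equals the first.\<close>
  have "row ?B 1 = row ?B 0"
  proof (rule eq_vecI)
    fix j assume "j < dim_vec (row ?B 0)"
    hence j: "j < ?n" by (simp add: mat_multrow_def jacobi_trudi_mat_def)
    have "?B $$ (1, j) = fps_X ^ (lam ! 0 + 1 - lam ! 1) * fps_X ^ nat (int (lam ! 1) - 1 + int j)"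
      using j assms by (simp add: mat_multrow_def jacobi_trudi_mat_def hcomp_int_miwa)
    also have "\<dots> = fps_X ^ (lam ! 0 + j)"
      unfolding power_add[symmetric] using assms by (simp add: nat_int_add)
    also have "\<dots> = ?B $$ (0, j)"
      using j n by (simp add: mat_multrow_def jacobi_trudi_mat_def hcomp_int_miwa)
    finally show "row ?B 1 $ j = row ?B 0 $ j"
      using j n by (simp add: mat_multrow_def jacobi_trudi_mat_def)
  qed (simp add: mat_multrow_def)
  hence "det ?B = 0"
    using assms A by (intro det_identical_rows[of _ ?n 1 0]) (auto simp: mat_multrow_def)
  moreover have "det ?B = fps_X ^ (lam ! 0 + 1 - lam ! 1) * det ?A"
    by (rule det_multrow[OF _ A]) (use assms in auto)
  ultimately show ?thesis by (simp add: schur_eq_det)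
qed

lemma hcomp_int_neg_miwa:
  "hcomp_int (\<lambda>k. - miwa k :: 'a::field_char_0 fps) k =
     (if k = 0 then 1 else if k = 1 then - fps_X else 0)"
  unfolding hcomp_int_def hcomp_neg_miwa by (auto simp: nat_eq_iff)

lemma schur_neg_miwa_eq_0:
  assumes "lam \<noteq> []" and "lam ! 0 \<ge> 2"
  shows "schur (\<lambda>k. - miwa k :: 'a::field_char_0 fps) lam = 0"
  unfolding schur_def
proof (intro sum.neutral ballI)
  fix p assume "p \<in> {p. p permutes {0..<length lam}}"
  have "(\<Prod>i<length lam. hcomp_int (\<lambda>k. - miwa k :: 'a fps) (int (lam ! i) - int i + int (p i))) = 0"
    using assms by (intro prod_zero bexI[of _ 0]) (auto simp: hcomp_int_neg_miwa)
  thus "of_int (sign p) *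
      (\<Prod>i<length lam. hcomp_int (\<lambda>k. - miwa k :: 'a fps) (int (lam ! i) - int i + int (p i))) = 0"
    by simp
qed

definition ecomp :: "(nat \<Rightarrow> 'r::{comm_ring_1,inverse}) \<Rightarrow> nat \<Rightarrow> 'r" where
  "ecomp t n = schur t (replicate n 1)"

lemma ecomp_neg_miwa: "ecomp (\<lambda>k. - miwa k :: 'a::field_char_0 fps) n = (- fps_X) ^ n"
proof -
  let ?A = "jacobi_trudi_mat (\<lambda>k. - miwa k :: 'a fps) (replicate n 1)"
  have "det ?A = prod_list (diag_mat ?A)"
    using jacobi_trudi_mat_carrier[of _ "replicate n 1"]
    by (intro det_lower_triangular[of n]) (auto simp: jacobi_trudi_mat_def hcomp_int_neg_miwa)
  also have "diag_mat ?A = map (\<lambda>i. - fps_X) [0..<n]"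
    unfolding diag_mat_def by (auto simp: jacobi_trudi_mat_def hcomp_int_neg_miwa)
  finally show ?thesis
    by (simp add: ecomp_def schur_eq_det map_replicate_const prod_list_replicate)
qed

lemma jacobi_trudi_column_minor:
  fixes u :: "nat \<Rightarrow> 'r::{comm_ring_1,inverse}"
  assumes "j < n"
  shows "mat_delete (jacobi_trudi_mat u (replicate n 1)) 0 j =
    four_block_mat (mat j j (\<lambda>(a, b). hcomp_int u (int b - int a)))
      (mat j (n - 1 - j) (\<lambda>(a, b). hcomp_int u (int (b + j) - int a + 1)))
      (0\<^sub>m (n - 1 - j) j) (jacobi_trudi_mat u (replicate (n - 1 - j) 1))"
    (is "?M = four_block_mat ?U ?C ?Z ?D")
proof (rule eq_matI)
  fix a b assume "a < dim_row (four_block_mat ?U ?C ?Z ?D)" "b < dim_col (four_block_mat ?U ?C ?Z ?D)"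
  hence ab: "a < n - 1" "b < n - 1" using assms by (auto simp: jacobi_trudi_mat_def)
  have M: "?M $$ (a, b) = hcomp_int u (int (if b < j then b else Suc b) - int a)"
    using ab assms by (auto simp: mat_delete_def jacobi_trudi_mat_def)
  consider "a < j" | "b < j" "a \<ge> j" | "b \<ge> j" "a \<ge> j" by linarith
  thus "?M $$ (a, b) = four_block_mat ?U ?C ?Z ?D $$ (a, b)"
  proof cases
    case 1
    thus ?thesis using ab assms unfolding M by (auto simp: jacobi_trudi_mat_def algebra_simps)
  next
    case 2
    thus ?thesis using ab assms unfolding M by (auto simp: jacobi_trudi_mat_def hcomp_int_def)
  next
    case 3
    hence "int (Suc b) - int a = int 1 - int (a - j) + int (b - j)" by auto
    thus ?thesis using 3 ab assms unfolding M by (auto simp: jacobi_trudi_mat_def add_diff_eq)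
  qed
qed (use assms in \<open>auto simp: jacobi_trudi_mat_def\<close>)

lemma det_jacobi_trudi_column_minor:
  fixes u :: "nat \<Rightarrow> 'r::{idom,inverse}"
  assumes "j < n"
  shows "det (mat_delete (jacobi_trudi_mat u (replicate n 1)) 0 j) = ecomp u (n - 1 - j)"
proof -
  let ?U = "mat j j (\<lambda>(a, b). hcomp_int u (int b - int a))"
  have "det ?U = prod_list (diag_mat ?U)"
    by (rule det_upper_triangular) (auto simp: upper_triangular_def hcomp_int_def)
  also have "diag_mat ?U = map (\<lambda>i. 1) [0..<j]"
    unfolding diag_mat_def by (auto simp: hcomp_int_def)
  finally have "det ?U = 1" by (simp add: map_replicate_const)
  thus ?thesis
    unfolding jacobi_trudi_column_minor[OF assms] ecomp_def schur_eq_det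
    using jacobi_trudi_mat_carrier[of u "replicate (n - 1 - j) 1"]
    by (subst det_four_block_mat_lower_left_zero) auto
qed

lemma ecomp_laplace:
  fixes u :: "nat \<Rightarrow> 'r::{idom,inverse}"
  assumes "n \<ge> 1"
  shows "ecomp u n = (\<Sum>j<n. (-1) ^ j * hcomp u (Suc j) * ecomp u (n - 1 - j))"
proof -
  let ?A = "jacobi_trudi_mat u (replicate n 1)"
  have "ecomp u n = (\<Sum>j<n. ?A $$ (0, j) * cofactor ?A 0 j)"
    unfolding ecomp_def schur_eq_det
    using jacobi_trudi_mat_carrier[of u "replicate n 1"] assms
    by (intro laplace_expansion_row) auto
  also have "\<dots> = (\<Sum>j<n. (-1) ^ j * hcomp u (Suc j) * ecomp u (n - 1 - j))"
  proof (rule sum.cong[OF refl])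
    fix j assume "j \<in> {..<n}"
    hence j: "j < n" by simp
    have "nat (1 + int j) = Suc j" by (metis nat_int of_nat_Suc)
    hence "?A $$ (0, j) = hcomp u (Suc j)"
      using j by (simp add: jacobi_trudi_mat_def hcomp_int_def)
    thus "?A $$ (0, j) * cofactor ?A 0 j = (-1) ^ j * hcomp u (Suc j) * ecomp u (n - 1 - j)"
      unfolding cofactor_def det_jacobi_trudi_column_minor[OF j] by simp
  qed
  finally show ?thesis .
qed

lemma neg_one_power_diff: "j \<le> m \<Longrightarrow> (-1 :: 'a::ring_1) ^ (m - j) = (-1) ^ m * (-1) ^ j"
proof -
  assume "j \<le> m"
  hence "(-1 :: 'a) ^ m = (-1) ^ (m - j) * (-1) ^ j"
    by (simp flip: power_add)
  hence "(-1 :: 'a) ^ m * (-1) ^ j = (-1) ^ (m - j) * ((-1) ^ j * (-1) ^ j)"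
    by (simp add: mult.assoc)
  also have "(-1 :: 'a) ^ j * (-1) ^ j = (-1) ^ (2 * j)"
    by (simp only: mult_2 power_add)
  also have "\<dots> = 1" by (rule power_minus1_even)
  finally show ?thesis by simp
qed

lemma hcomp_fps_mult_alternating_ecomp_fps:
  fixes u :: "nat \<Rightarrow> 'r::{idom,inverse}"
  shows "Abs_fps (hcomp u) * Abs_fps (\<lambda>n. (-1) ^ n * ecomp u n) = 1"
proof (rule fps_ext)
  fix n
  show "fps_nth (Abs_fps (hcomp u) * Abs_fps (\<lambda>n. (-1) ^ n * ecomp u n)) n = fps_nth 1 n"
  proof (cases n)
    case 0
    thus ?thesis by (simp add: fps_mult_nth ecomp_def schur_Nil)
  next
    case (Suc m)
    have "(\<Sum>j=0..m. hcomp u (Suc j) * ((-1) ^ (m - j) * ecomp u (m - j)))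
        = (-1) ^ m * (\<Sum>j<Suc m. (-1) ^ j * hcomp u (Suc j) * ecomp u (Suc m - 1 - j))"
      unfolding sum_distrib_left atLeast0AtMost lessThan_Suc_atMost
      by (rule sum.cong) (auto simp: neg_one_power_diff algebra_simps)
    also have "\<dots> = (-1) ^ m * ecomp u (Suc m)"
      by (simp only: ecomp_laplace[of "Suc m", symmetric])
    finally have "(\<Sum>i=0..Suc m. hcomp u i * ((-1) ^ (Suc m - i) * ecomp u (Suc m - i))) = 0"
      unfolding sum.atLeast0_atMost_Suc_shift by (simp add: ecomp_def schur_Nil)
    thus ?thesis using Suc by (simp add: fps_mult_nth)
  qed
qed

lemma fps_deriv_eq_mult_iff_newton:
  fixes b u :: "nat \<Rightarrow> 'a::comm_ring_1"
  shows "fps_deriv (Abs_fps b) = fps_deriv (Abs_fps u) * Abs_fps b \<longleftrightarrow>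
    (\<forall>n. of_nat n * b n = (\<Sum>k=1..n. of_nat k * u k * b (n - k)))"
proof -
  have coeff: "fps_nth (fps_deriv (Abs_fps u) * Abs_fps b) m
      = (\<Sum>k=1..Suc m. of_nat k * u k * b (Suc m - k))" for m
  proof -
    have "fps_nth (fps_deriv (Abs_fps u) * Abs_fps b) m = (\<Sum>i=0..m. of_nat (Suc i) * u (Suc i) * b (m - i))"
      by (simp add: fps_mult_nth)
    also have "\<dots> = (\<Sum>k=Suc 0..Suc m. of_nat k * u k * b (Suc m - k))"
      by (subst sum.shift_bounds_cl_Suc_ivl) simp
    finally show ?thesis by simp
  qed
  have "fps_deriv (Abs_fps b) = fps_deriv (Abs_fps u) * Abs_fps b \<longleftrightarrow>
      (\<forall>m. of_nat (Suc m) * b (Suc m) = (\<Sum>k=1..Suc m. of_nat k * u k * b (Suc m - k)))"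
    by (simp add: fps_eq_iff coeff)
  also have "\<dots> \<longleftrightarrow> (\<forall>n. of_nat n * b n = (\<Sum>k=1..n. of_nat k * u k * b (n - k)))"
    (is "(\<forall>m. ?P (Suc m)) \<longleftrightarrow> (\<forall>n. ?P n)")
  proof (intro iffI allI)
    fix n assume "\<forall>m. ?P (Suc m)"
    thus "?P n" by (cases n) simp_all
  qed blast
  finally show ?thesis .
qed

lemma fps_deriv_hcomp_fps:
  fixes u :: "nat \<Rightarrow> 'a::field_char_0"
  shows "fps_deriv (Abs_fps (hcomp u)) = fps_deriv (Abs_fps u) * Abs_fps (hcomp u)"
  unfolding fps_deriv_eq_mult_iff_newton by (intro allI hcomp_newton) simp

lemma ecomp_newton:
  fixes u :: "nat \<Rightarrow> 'a::field_char_0"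
  shows "of_nat n * ((-1) ^ n * ecomp u n)
    = (\<Sum>k=1..n. of_nat k * - u k * ((-1) ^ (n - k) * ecomp u (n - k)))"
proof -
  let ?H = "Abs_fps (hcomp u)" and ?E = "Abs_fps (\<lambda>n. (-1) ^ n * ecomp u n)"
  have HE: "?H * ?E = 1" by (rule hcomp_fps_mult_alternating_ecomp_fps)
  \<comment> \<open>Differentiating H E = 1 and using H' = T' H gives E' = -T' E.\<close>
  have "?H * (fps_deriv ?E + fps_deriv (Abs_fps u) * ?E) = ?H * fps_deriv ?E + fps_deriv ?H * ?E"
    by (simp only: fps_deriv_hcomp_fps distrib_left mult.left_commute mult.assoc)
  also have "\<dots> = fps_deriv (?H * ?E)" by (simp only: fps_deriv_mult)
  also have "\<dots> = 0" by (simp only: HE fps_deriv_1)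
  finally have "?H * (fps_deriv ?E + fps_deriv (Abs_fps u) * ?E) = 0" .
  moreover have "?H \<noteq> 0" using HE by (metis mult_zero_left zero_neq_one)
  ultimately have "fps_deriv ?E + fps_deriv (Abs_fps u) * ?E = 0" by simp
  hence "fps_deriv ?E = - fps_deriv (Abs_fps u) * ?E" by (simp add: eq_neg_iff_add_eq_0)
  moreover have "- fps_deriv (Abs_fps u) = fps_deriv (Abs_fps (\<lambda>k. - u k))"
    by (simp add: fps_eq_iff)
  ultimately have "fps_deriv ?E = fps_deriv (Abs_fps (\<lambda>k. - u k)) * ?E" by simp
  thus ?thesis by (simp only: fps_deriv_eq_mult_iff_newton)
qed

lemma finite_partitions_of: "finite (partitions_of n)"
proof (rule finite_subset)
  show "partitions_of n \<subseteq> {xs. set xs \<subseteq> {0..n} \<and> length xs \<le> n}"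
  proof safe
    fix xs assume "xs \<in> partitions_of n"
    hence zero: "0 \<notin> set xs" and sum: "sum_list xs = n" unfolding partitions_of_def by auto
    have "length xs \<le> sum_list xs" using zero by (induction xs) auto
    thus "length xs \<le> n" using sum by simp
    fix x assume "x \<in> set xs"
    thus "x \<in> {0..n}" using member_le_sum_list[of x xs] sum by simp
  qed
qed (rule finite_lists_length_le; simp)

lemma partitions_of_0: "partitions_of 0 = {[]}"
  unfolding partitions_of_def by (auto simp: sum_list_eq_0_iff) (metis ex_in_conv set_empty)

lemma singleton_in_partitions_of: "n > 0 \<Longrightarrow> [n] \<in> partitions_of n"
  unfolding partitions_of_def by simp

lemma replicate_one_in_partitions_of: "replicate n 1 \<in> partitions_of n"
  unfolding partitions_of_def by (induction n) auto

lemma partitions_of_not_singleton: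
  assumes "lam \<in> partitions_of n" "n > 0" "lam \<noteq> [n]"
  shows "length lam \<ge> 2 \<and> lam ! 1 \<ge> 1 \<and> lam ! 1 \<le> lam ! 0"
proof -
  have sorted: "sorted_wrt (\<ge>) lam" and zero: "0 \<notin> set lam" and sum: "sum_list lam = n"
    using assms(1) unfolding partitions_of_def by auto
  have len: "length lam \<ge> 2"
  proof (rule ccontr)
    assume "\<not> length lam \<ge> 2"
    then consider "lam = []" | x where "lam = [x]"
      by (cases lam; cases "tl lam") auto
    thus False using sum assms(2,3) by cases auto
  qed
  have "lam ! 1 \<in> set lam" using len by simp
  hence "lam ! 1 \<noteq> 0" using zero by (metis)
  moreover have "lam ! 1 \<le> lam ! 0" using sorted_wrt_nth_less[OF sorted, of 0 1] len by simp
  ultimately show ?thesis using len by (simp add: Suc_le_eq)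
qed

lemma partitions_of_not_column:
  assumes "lam \<in> partitions_of n" "lam \<noteq> replicate n 1"
  shows "lam \<noteq> [] \<and> lam ! 0 \<ge> 2"
proof -
  have sorted: "sorted_wrt (\<ge>) lam" and zero: "0 \<notin> set lam" and sum: "sum_list lam = n"
    using assms(1) unfolding partitions_of_def by auto
  have "\<exists>x\<in>set lam. x \<ge> 2"
  proof (rule ccontr)
    assume "\<not> (\<exists>x\<in>set lam. x \<ge> 2)"
    with zero have ones: "\<forall>x\<in>set lam. x = 1" by (fastforce simp: not_le less_2_cases_iff)
    hence "sum_list lam = length lam" by (induction lam) auto
    moreover have "replicate (length lam) 1 = lam" by (rule replicate_length_same[OF ones])
    ultimately show False using sum assms(2) by simp
  qed
  then obtain x where "x \<in> set lam" "x \<ge> 2" by blast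
  then obtain i where i: "i < length lam" "lam ! i \<ge> 2" by (auto simp: in_set_conv_nth)
  moreover have "lam ! i \<le> lam ! 0"
    using sorted_wrt_nth_less[OF sorted, of 0 i] i by (cases "i = 0") auto
  ultimately show ?thesis by auto
qed

definition content_prod :: "'a::field poly \<Rightarrow> 'a \<Rightarrow> 'a \<Rightarrow> nat \<Rightarrow> 'a" where
  "content_prod G \<beta> \<sigma> n = (\<Prod>m<n. poly G (\<sigma> * \<beta> * of_nat m))"

lemma r_lambda_singleton: "r_lambda G \<beta> [n] = content_prod G \<beta> 1 n"
proof -
  have "r_lambda G \<beta> [n] = (\<Prod>j=1..n. poly G (of_int (int j - 1) * \<beta>))"
    unfolding r_lambda_def by simp
  also have "\<dots> = content_prod G \<beta> 1 n"
    unfolding content_prod_def by (induction n) (simp_all add: prod.cl_ivl_Suc algebra_simps)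
  finally show ?thesis .
qed

lemma r_lambda_column: "r_lambda G \<beta> (replicate n 1) = content_prod G \<beta> (-1) n"
proof -
  have "r_lambda G \<beta> (replicate n 1) = (\<Prod>i=1..n. poly G (of_int (1 - int i) * \<beta>))"
    unfolding r_lambda_def by (rule prod.cong) auto
  also have "\<dots> = content_prod G \<beta> (-1) n"
    unfolding content_prod_def by (induction n) (simp_all add: prod.cl_ivl_Suc algebra_simps)
  finally show ?thesis .
qed

lemma content_prod_split:
  "k \<le> n \<Longrightarrow>
    content_prod G \<beta> \<sigma> n = content_prod G \<beta> \<sigma> (n - k) * (\<Prod>i=1..k. poly G (\<sigma> * \<beta> * of_nat (n - i)))"
proof (induction k)
  case (Suc k)
  have "n - k = Suc (n - Suc k)" using Suc.prems by simp
  hence "content_prod G \<beta> \<sigma> (n - k)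
      = content_prod G \<beta> \<sigma> (n - Suc k) * poly G (\<sigma> * \<beta> * of_nat (n - Suc k))"
    unfolding content_prod_def by simp
  thus ?case using Suc by (simp add: prod.cl_ivl_Suc algebra_simps)
qed simp

lemma suminf_fps_const_mult_X_power: "(\<Sum>n. fps_const (c n) * fps_X ^ n) = Abs_fps c"
proof -
  have "(\<lambda>n. \<Sum>i<Suc n. fps_const (c i) * fps_X ^ i) \<longlonglongrightarrow> Abs_fps c"
    using fps_notation[of "Abs_fps c"] by (simp add: atLeast0AtMost lessThan_Suc_atMost)
  hence "(\<lambda>n. fps_const (c n) * fps_X ^ n) sums Abs_fps c"
    unfolding sums_def by (rule LIMSEQ_imp_Suc)
  thus ?thesis by (rule sums_unique[symmetric])
qed

lemma tau_eq_Abs_fps_if_single_partition: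
  fixes t :: "nat \<Rightarrow> 'a::field fps"
  assumes p: "\<And>n. p n \<in> partitions_of n"
    and vanish: "\<And>n lam. lam \<in> partitions_of n \<Longrightarrow> lam \<noteq> p n \<Longrightarrow> schur t lam = 0"
    and monomial: "\<And>n. schur t (p n) = fps_const (c n) * fps_X ^ n"
  shows "tau G \<beta> \<gamma> s t =
    Abs_fps (\<lambda>n. \<gamma> ^ n * r_lambda G \<beta> (p n) * schur (\<lambda>k. s k / \<beta>) (p n) * c n)"
proof -
  have "(\<Sum>lam\<in>partitions_of n. fps_const (\<gamma> ^ n * r_lambda G \<beta> lam * schur (\<lambda>k. s k / \<beta>) lam) * schur t lam)
      = fps_const (\<gamma> ^ n * r_lambda G \<beta> (p n) * schur (\<lambda>k. s k / \<beta>) (p n) * c n) * fps_X ^ n" for n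
  proof -
    have "(\<Sum>lam\<in>partitions_of n - {p n}.
        fps_const (\<gamma> ^ n * r_lambda G \<beta> lam * schur (\<lambda>k. s k / \<beta>) lam) * schur t lam) = 0"
    proof (rule sum.neutral, rule ballI)
      fix lam assume "lam \<in> partitions_of n - {p n}"
      hence "schur t lam = 0" using vanish by blast
      thus "fps_const (\<gamma> ^ n * r_lambda G \<beta> lam * schur (\<lambda>k. s k / \<beta>) lam) * schur t lam = 0" by simp
    qed
    hence "(\<Sum>lam\<in>partitions_of n. fps_const (\<gamma> ^ n * r_lambda G \<beta> lam * schur (\<lambda>k. s k / \<beta>) lam) * schur t lam)
        = fps_const (\<gamma> ^ n * r_lambda G \<beta> (p n) * schur (\<lambda>k. s k / \<beta>) (p n)) * schur t (p n)"
      by (simp add: sum.remove[OF finite_partitions_of p])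
    thus ?thesis unfolding monomial by (simp only: mult.assoc[symmetric] fps_const_mult)
  qed
  thus ?thesis unfolding tau_def by (simp only: suminf_fps_const_mult_X_power)
qed

lemma tau_miwa:
  fixes G :: "'a::field_char_0 poly"
  shows "tau G \<beta> \<gamma> s miwa = Abs_fps (\<lambda>n. \<gamma> ^ n * content_prod G \<beta> 1 n * hcomp (\<lambda>k. s k / \<beta>) n)"
proof -
  let ?p = "\<lambda>n. if n = 0 then [] else [n]"
  have "tau G \<beta> \<gamma> s miwa =
      Abs_fps (\<lambda>n. \<gamma> ^ n * r_lambda G \<beta> (?p n) * schur (\<lambda>k. s k / \<beta>) (?p n) * 1)"
  proof (rule tau_eq_Abs_fps_if_single_partition)
    show "?p n \<in> partitions_of n" for n
      by (simp add: partitions_of_0 singleton_in_partitions_of)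
    show "schur (miwa :: nat \<Rightarrow> 'a fps) lam = 0" if "lam \<in> partitions_of n" "lam \<noteq> ?p n" for n lam
    proof (cases "n = 0")
      case False
      thus ?thesis using that partitions_of_not_singleton[OF that(1)] by (intro schur_miwa_eq_0) auto
    qed (use that in \<open>simp add: partitions_of_0\<close>)
    show "schur (miwa :: nat \<Rightarrow> 'a fps) (?p n) = fps_const 1 * fps_X ^ n" for n
      by (simp add: schur_Nil schur_singleton hcomp_miwa)
  qed
  also have "\<dots> = Abs_fps (\<lambda>n. \<gamma> ^ n * content_prod G \<beta> 1 n * hcomp (\<lambda>k. s k / \<beta>) n)"
  proof -
    have "r_lambda G \<beta> (?p n) * schur (\<lambda>k. s k / \<beta>) (?p n)
        = content_prod G \<beta> 1 n * hcomp (\<lambda>k. s k / \<beta>) n" for n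
    proof (cases "n = 0")
      case True
      thus ?thesis by (simp add: r_lambda_def content_prod_def schur_Nil)
    qed (simp add: r_lambda_singleton schur_singleton)
    thus ?thesis by (simp only: mult.assoc mult_1_right)
  qed
  finally show ?thesis .
qed

lemma tau_neg_miwa:
  fixes G :: "'a::field_char_0 poly"
  shows "tau G \<beta> \<gamma> s (\<lambda>k. - miwa k) =
    Abs_fps (\<lambda>n. \<gamma> ^ n * content_prod G \<beta> (-1) n * ((-1) ^ n * ecomp (\<lambda>k. s k / \<beta>) n))"
proof -
  have "tau G \<beta> \<gamma> s (\<lambda>k. - miwa k) = Abs_fps (\<lambda>n. \<gamma> ^ n * r_lambda G \<beta> (replicate n 1)
      * schur (\<lambda>k. s k / \<beta>) (replicate n 1) * (-1) ^ n)"
  proof (rule tau_eq_Abs_fps_if_single_partition)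
    show "replicate n 1 \<in> partitions_of n" for n by (rule replicate_one_in_partitions_of)
    show "schur (\<lambda>k. - miwa k :: 'a fps) lam = 0" if "lam \<in> partitions_of n" "lam \<noteq> replicate n 1" for n lam
      using partitions_of_not_column[OF that] by (intro schur_neg_miwa_eq_0) auto
    show "schur (\<lambda>k. - miwa k :: 'a fps) (replicate n 1) = fps_const ((-1) ^ n) * fps_X ^ n" for n
    proof -
      have "fps_const (-1) * fps_X = (- fps_X :: 'a fps)" by (simp add: fps_eq_iff)
      hence "schur (\<lambda>k. - miwa k :: 'a fps) (replicate n 1) = (fps_const (-1) * fps_X) ^ n"
        using ecomp_neg_miwa[of n] by (simp only: ecomp_def)
      thus ?thesis by (simp only: power_mult_distrib fps_const_power)
    qed
  qed
  thus ?thesis by (simp only: r_lambda_column ecomp_def[symmetric] mult_ac)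
qed

lemma Rop_funpow_nth:
  "fps_nth ((Rop G \<beta> \<gamma> \<sigma> ^^ k) f) n =
     (if k \<le> n then \<gamma> ^ k * (\<Prod>i=1..k. poly G (\<sigma> * \<beta> * of_nat (n - i))) * fps_nth f (n - k) else 0)"
proof (induction k arbitrary: n)
  case (Suc k)
  show ?case
  proof (cases n)
    case (Suc n')
    have "(\<Prod>i=1..Suc k. poly G (\<sigma> * \<beta> * of_nat (Suc n' - i)))
        = poly G (\<sigma> * \<beta> * of_nat n') * (\<Prod>i=Suc 1..Suc k. poly G (\<sigma> * \<beta> * of_nat (Suc n' - i)))"
      by (subst prod.atLeast_Suc_atMost) simp_all
    also have "(\<Prod>i=Suc 1..Suc k. poly G (\<sigma> * \<beta> * of_nat (Suc n' - i)))
        = (\<Prod>i=1..k. poly G (\<sigma> * \<beta> * of_nat (n' - i)))"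
      by (subst prod.shift_bounds_cl_Suc_ivl) simp
    finally have prod_Suc: "(\<Prod>i=1..Suc k. poly G (\<sigma> * \<beta> * of_nat (Suc n' - i)))
        = poly G (\<sigma> * \<beta> * of_nat n') * (\<Prod>i=1..k. poly G (\<sigma> * \<beta> * of_nat (n' - i)))" .
    show ?thesis using Suc.IH[of n'] unfolding Suc prod_Suc by (simp add: Rop_def)
  qed (simp add: Rop_def)
qed simp

lemma fps_nth_S_op_Rop_content:
  assumes "\<forall>k>L. s k = 0"
  shows "fps_nth (S_op L s (Rop G \<beta> \<gamma> \<sigma>) (Abs_fps (\<lambda>n. \<gamma> ^ n * content_prod G \<beta> \<sigma> n * b n))) n
    = \<gamma> ^ n * content_prod G \<beta> \<sigma> n * (\<Sum>k=1..n. of_nat k * s k * b (n - k))"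
proof -
  let ?f = "\<lambda>k. of_nat k * s k * (\<gamma> ^ n * content_prod G \<beta> \<sigma> n * b (n - k))"
  have shifted: "\<gamma> ^ k * (\<Prod>i=1..k. poly G (\<sigma> * \<beta> * of_nat (n - i)))
      * (\<gamma> ^ (n - k) * content_prod G \<beta> \<sigma> (n - k) * b (n - k))
      = \<gamma> ^ n * content_prod G \<beta> \<sigma> n * b (n - k)" if "k \<le> n" for k
    using that by (simp add: content_prod_split[OF that] power_add[symmetric] algebra_simps)
  have "fps_nth (S_op L s (Rop G \<beta> \<gamma> \<sigma>) (Abs_fps (\<lambda>n. \<gamma> ^ n * content_prod G \<beta> \<sigma> n * b n))) n
      = (\<Sum>k=1..L. if k \<le> n then ?f k else 0)"
    unfolding S_op_def fps_sum_nth
  proof (rule sum.cong[OF refl])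
    fix k
    show "fps_nth (fps_const (of_nat k * s k) * (Rop G \<beta> \<gamma> \<sigma> ^^ k)
        (Abs_fps (\<lambda>n. \<gamma> ^ n * content_prod G \<beta> \<sigma> n * b n))) n = (if k \<le> n then ?f k else 0)"
    proof (cases "k \<le> n")
      case True
      thus ?thesis
        by (simp only: fps_mult_left_const_nth Rop_funpow_nth fps_nth_Abs_fps if_True shifted)
    qed (simp add: Rop_funpow_nth)
  qed
  also have "\<dots> = (\<Sum>k=1..L+n. if k \<le> n then ?f k else 0)"
    by (rule sum.mono_neutral_left) (use assms in auto)
  also have "\<dots> = (\<Sum>k=1..n. ?f k)"
    by (subst sum.mono_neutral_right[of "{1..L+n}" "{1..n}"]) auto
  finally show ?thesis by (simp add: sum_distrib_left algebra_simps)
qed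

lemma fps_nth_Dop: "fps_nth (Dop f) n = of_nat n * fps_nth f n"
  unfolding Dop_def by (cases n) simp_all

lemma beta_Dop_eq_S_op_Rop_of_newton:
  fixes b :: "nat \<Rightarrow> 'a::field"
  assumes "\<forall>k>L. s k = 0" and "\<beta> \<noteq> 0"
    and newton: "\<And>n. of_nat n * b n = \<sigma> * (\<Sum>k=1..n. of_nat k * (s k / \<beta>) * b (n - k))"
  shows "fps_const \<beta> * Dop (Abs_fps (\<lambda>n. \<gamma> ^ n * content_prod G \<beta> \<sigma> n * b n))
    - fps_const \<sigma> * S_op L s (Rop G \<beta> \<gamma> \<sigma>) (Abs_fps (\<lambda>n. \<gamma> ^ n * content_prod G \<beta> \<sigma> n * b n)) = 0"
proof (rule fps_ext)
  fix n
  let ?a = "\<lambda>n. \<gamma> ^ n * content_prod G \<beta> \<sigma> n * b n"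
  have "fps_nth (fps_const \<beta> * Dop (Abs_fps ?a) - fps_const \<sigma> * S_op L s (Rop G \<beta> \<gamma> \<sigma>) (Abs_fps ?a)) n
      = \<gamma> ^ n * content_prod G \<beta> \<sigma> n *
        (\<beta> * (of_nat n * b n) - \<sigma> * (\<Sum>k=1..n. of_nat k * s k * b (n - k)))"
    by (simp only: fps_sub_nth fps_mult_left_const_nth fps_nth_Dop fps_nth_S_op_Rop_content[OF assms(1)])
       (simp add: algebra_simps)
  also have "\<beta> * (\<Sum>k=1..n. of_nat k * (s k / \<beta>) * b (n - k)) = (\<Sum>k=1..n. of_nat k * s k * b (n - k))"
    unfolding sum_distrib_left using assms(2) by (intro sum.cong) simp_all
  hence "\<beta> * (of_nat n * b n) = \<sigma> * (\<Sum>k=1..n. of_nat k * s k * b (n - k))"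
    unfolding newton by (simp only: mult.left_commute[of \<beta> \<sigma>])
  finally show "fps_nth (fps_const \<beta> * Dop (Abs_fps ?a) - fps_const \<sigma> * S_op L s (Rop G \<beta> \<gamma> \<sigma>) (Abs_fps ?a)) n
      = fps_nth 0 n" by simp
qed

theorem theorem6p1:
  fixes G :: "'a::field_char_0 poly" and \<beta> \<gamma> :: 'a and s :: "nat \<Rightarrow> 'a" and L :: nat
  assumes "coeff G 0 = 1"
    and "\<beta> \<noteq> 0"
    and "\<forall>k. k > L \<longrightarrow> s k = 0"
  shows "fps_const \<beta> * Dop (tau G \<beta> \<gamma> s miwa)
           - S_op L s (Rop G \<beta> \<gamma> 1) (tau G \<beta> \<gamma> s miwa) = 0
       \<and> fps_const \<beta> * Dop (tau G \<beta> \<gamma> s (\<lambda>k. - miwa k))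
           + S_op L s (Rop G \<beta> \<gamma> (-1)) (tau G \<beta> \<gamma> s (\<lambda>k. - miwa k)) = 0"
proof -
  let ?u = "\<lambda>k. s k / \<beta>"
  have "fps_const \<beta> * Dop (tau G \<beta> \<gamma> s miwa)
      - fps_const 1 * S_op L s (Rop G \<beta> \<gamma> 1) (tau G \<beta> \<gamma> s miwa) = 0"
    unfolding tau_miwa
  proof (rule beta_Dop_eq_S_op_Rop_of_newton)
    show "of_nat n * hcomp ?u n = 1 * (\<Sum>k=1..n. of_nat k * ?u k * hcomp ?u (n - k))" for n
      by (simp only: mult_1_left) (rule hcomp_newton, simp)
  qed (use assms in auto)
  moreover have "fps_const \<beta> * Dop (tau G \<beta> \<gamma> s (\<lambda>k. - miwa k))
      - fps_const (-1) * S_op L s (Rop G \<beta> \<gamma> (-1)) (tau G \<beta> \<gamma> s (\<lambda>k. - miwa k)) = 0"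
    unfolding tau_neg_miwa
  proof (rule beta_Dop_eq_S_op_Rop_of_newton)
    show "of_nat n * ((-1) ^ n * ecomp ?u n)
        = -1 * (\<Sum>k=1..n. of_nat k * ?u k * ((-1) ^ (n - k) * ecomp ?u (n - k)))" for n
      using ecomp_newton[of n ?u] by (simp add: sum_negf)
  qed (use assms in auto)
  ultimately show ?thesis by (simp flip: fps_const_neg)
qed

end
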